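(* Let $G$ be a graph with maximum degree $2$ and $k$ a positive integer. If $G$ has no path components with at least $k-1$ vertices and $0<s(G,P_k)\le 2k+1$, then $G$ has exactly one component with more than $k$ vertices, and this component is a cycle with $s(G,P_k)$ vertices.
   Context: $P_k$ is the path with $k$ vertices; $s(G,H)$ is the number of vertex subsets $X\subseteq V(G)$ such that $G[X]$ is isomorphic to $H$. *)

theory Defs
  imports Main
begin

definition graph :: "'a set \<Rightarrow> 'a set set \<Rightarrow> bool" where
  "graph V E \<longleftrightarrow> finite V \<and> (\<forall>e\<in>E. e \<subseteq> V \<and> card e = 2)"

definition degree :: "'a set \<Rightarrow> 'a set set \<Rightarrow> 'a \<Rightarrow> nat" where
  "degree V E v = card {u\<in>V. {u, v} \<in> E}"

definition max_degree :: "'a set \<Rightarrow> 'a set set \<Rightarrow> nat" where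
  "max_degree V E = Max (degree V E ` V)"

definition induced :: "'a set set \<Rightarrow> 'a set \<Rightarrow> 'a set set" where
  "induced E X = {e\<in>E. e \<subseteq> X}"

definition graph_iso :: "'a set \<Rightarrow> 'a set set \<Rightarrow> 'b set \<Rightarrow> 'b set set \<Rightarrow> bool" where
  "graph_iso V1 E1 V2 E2 \<longleftrightarrow>
     (\<exists>f. bij_betw f V1 V2 \<and> (\<forall>x\<in>V1. \<forall>y\<in>V1. {x, y} \<in> E1 \<longleftrightarrow> {f x, f y} \<in> E2))"

definition path_V :: "nat \<Rightarrow> nat set" where
  "path_V k = {0..<k}"
definition path_E :: "nat \<Rightarrow> nat set set" where
  "path_E k = {{i, Suc i} | i. Suc i < k}"
definition cycle_V :: "nat \<Rightarrow> nat set" where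
  "cycle_V n = {0..<n}"
definition cycle_E :: "nat \<Rightarrow> nat set set" where
  "cycle_E n = {{i, (Suc i) mod n} | i. i < n}"

definition s_count :: "'a set \<Rightarrow> 'a set set \<Rightarrow> 'b set \<Rightarrow> 'b set set \<Rightarrow> nat" where
  "s_count V E VH EH = card {X. X \<subseteq> V \<and> graph_iso X (induced E X) VH EH}"

definition adj :: "'a set \<Rightarrow> 'a set set \<Rightarrow> ('a \<times> 'a) set" where
  "adj V E = {(u, v). u \<in> V \<and> v \<in> V \<and> {u, v} \<in> E}"

definition components :: "'a set \<Rightarrow> 'a set set \<Rightarrow> 'a set set" where
  "components V E = {(adj V E)\<^sup>* `` {v} | v. v \<in> V}"

definition is_path_component :: "'a set \<Rightarrow> 'a set set \<Rightarrow> 'a set \<Rightarrow> bool" where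
  "is_path_component V E C \<longleftrightarrow>
     C \<in> components V E \<and> graph_iso C (induced E C) (path_V (card C)) (path_E (card C))"

definition is_cycle_component :: "'a set \<Rightarrow> 'a set set \<Rightarrow> 'a set \<Rightarrow> bool" where
  "is_cycle_component V E C \<longleftrightarrow>
     C \<in> components V E \<and> card C \<ge> 3 \<and>
     graph_iso C (induced E C) (cycle_V (card C)) (cycle_E (card C))"

end

theory Submission
  imports Defs "HOL-Number_Theory.Cong"
begin

text \<open>In a graph of maximum degree 2 a longest walk inside a component visits all of it, so
  every component is a path or a cycle. An induced \<open>P\<^sub>k\<close> is connected and hence lies in a
  single component, which has at least \<open>k\<close> vertices; as path components are shorter, it is a
  cycle \<open>C\<^sub>n\<close>. An induced \<open>P\<^sub>k\<close> of \<open>C\<^sub>n\<close> is an arc of \<open>k\<close> consecutive vertices, which forces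
  \<open>k < n\<close>, and \<open>C\<^sub>n\<close> has exactly \<open>n\<close> such arcs. So \<open>s(G,P\<^sub>k)\<close> is the total size of the cycle
  components with more than \<open>k\<close> vertices, and \<open>0 < s(G,P\<^sub>k) \<le> 2k + 1\<close> leaves room for exactly
  one of them.\<close>

lemma graph_edge_in_vertices:
  assumes "graph V E" "{x, y} \<in> E"
  shows "x \<in> V" "y \<in> V"
  using assms unfolding graph_def by blast+

lemma graph_edge_neq:
  assumes "graph V E" "{x, y} \<in> E"
  shows "x \<noteq> y"
  using assms unfolding graph_def by fastforce

lemma neighbours_of_max_degree_le_2:
  assumes g: "graph V E" and md: "max_degree V E \<le> 2"
    and "{a, v} \<in> E" "{b, v} \<in> E" "{c, v} \<in> E" "a \<noteq> b"
  shows "c = a \<or> c = b"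
proof (rule ccontr)
  assume "\<not> (c = a \<or> c = b)"
  then have "3 = card {a, b, c}" using \<open>a \<noteq> b\<close> by auto
  also have "\<dots> \<le> degree V E v"
    unfolding degree_def using g assms(3-5) graph_edge_in_vertices[OF g]
    by (intro card_mono) (auto simp: graph_def)
  also have "\<dots> \<le> max_degree V E"
    unfolding max_degree_def using g graph_edge_in_vertices(2)[OF g assms(3)] by (simp add: graph_def)
  finally show False using md by simp
qed

lemma mem_path_E_iff: "s < k \<Longrightarrow> t < k \<Longrightarrow> {s, t} \<in> path_E k \<longleftrightarrow> t = Suc s \<or> s = Suc t"
  unfolding path_E_def by (auto simp: doubleton_eq_iff)

lemma mem_cycle_E_iff:
  "i < n \<Longrightarrow> j < n \<Longrightarrow> {i, j} \<in> cycle_E n \<longleftrightarrow> j = Suc i mod n \<or> i = Suc j mod n"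
  unfolding cycle_E_def by (auto simp: doubleton_eq_iff)

lemma graph_iso_inducedI:
  assumes "bij_betw g A X" "\<And>s t. s \<in> A \<Longrightarrow> t \<in> A \<Longrightarrow> {g s, g t} \<in> E \<longleftrightarrow> {s, t} \<in> EH"
  shows "graph_iso X (induced E X) A EH"
  unfolding graph_iso_def
proof (intro exI conjI ballI)
  show "bij_betw (inv_into A g) X A" using assms(1) by (rule bij_betw_inv_into)
  fix x y assume "x \<in> X" "y \<in> X"
  then have "inv_into A g x \<in> A" "inv_into A g y \<in> A" "g (inv_into A g x) = x" "g (inv_into A g y) = y"
    using assms(1) by (auto simp: bij_betw_def inv_into_into f_inv_into_f)
  then show "{x, y} \<in> induced E X \<longleftrightarrow> {inv_into A g x, inv_into A g y} \<in> EH"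
    using assms(2) \<open>x \<in> X\<close> \<open>y \<in> X\<close> unfolding induced_def by force
qed

lemma graph_iso_induced_pathE:
  assumes "graph_iso X (induced E X) (path_V k) (path_E k)"
  obtains g where "bij_betw g {..<k} X"
    "\<And>s t. s < k \<Longrightarrow> t < k \<Longrightarrow> {g s, g t} \<in> E \<longleftrightarrow> t = Suc s \<or> s = Suc t"
proof -
  obtain f where f: "bij_betw f X {..<k}"
    and fE: "\<forall>x\<in>X. \<forall>y\<in>X. {x, y} \<in> induced E X \<longleftrightarrow> {f x, f y} \<in> path_E k"
    using assms unfolding graph_iso_def path_V_def atLeast0LessThan by blast
  define g where "g = inv_into X f"
  have g: "bij_betw g {..<k} X" unfolding g_def using f by (rule bij_betw_inv_into)
  moreover have "{g s, g t} \<in> E \<longleftrightarrow> t = Suc s \<or> s = Suc t" if "s < k" "t < k" for s t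
  proof -
    have "g s \<in> X" "g t \<in> X" "f (g s) = s" "f (g t) = t"
      using g f that unfolding g_def by (auto simp: bij_betw_def f_inv_into_f bij_betw_inv_into_right)
    then show ?thesis using fE mem_path_E_iff[OF that] unfolding induced_def by force
  qed
  ultimately show ?thesis using that by blast
qed

lemma card_induced_path:
  "graph_iso X (induced E X) (path_V k) (path_E k) \<Longrightarrow> card X = k"
  by (metis graph_iso_induced_pathE bij_betw_same_card card_lessThan)

section \<open>Connected components\<close>

lemma equiv_rtrancl_adj: "equiv UNIV ((adj V E)\<^sup>*)"
proof (rule equivI)
  show "sym ((adj V E)\<^sup>*)"
    by (rule sym_rtrancl) (auto simp: sym_def adj_def insert_commute)
qed (simp_all add: refl_rtrancl trans_rtrancl)

lemma components_eq_class:
  assumes "C \<in> components V E" "v \<in> C"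
  shows "C = (adj V E)\<^sup>* `` {v}"
proof -
  obtain u where "C = (adj V E)\<^sup>* `` {u}" using assms(1) unfolding components_def by blast
  moreover from this have "(u, v) \<in> (adj V E)\<^sup>*" using assms(2) by blast
  ultimately show ?thesis using equiv_class_eq[OF equiv_rtrancl_adj] by metis
qed

lemma components_disjoint:
  "C \<in> components V E \<Longrightarrow> C' \<in> components V E \<Longrightarrow> v \<in> C \<Longrightarrow> v \<in> C' \<Longrightarrow> C = C'"
  using components_eq_class[of C V E v] components_eq_class[of C' V E v] by simp

lemma rtrancl_adj_in_vertices: "(u, v) \<in> (adj V E)\<^sup>* \<Longrightarrow> u \<in> V \<Longrightarrow> v \<in> V"
  by (induction rule: rtrancl_induct) (auto simp: adj_def)

lemma components_subset: "C \<in> components V E \<Longrightarrow> C \<subseteq> V"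
  unfolding components_def by (auto intro: rtrancl_adj_in_vertices)

lemma components_finite: "graph V E \<Longrightarrow> C \<in> components V E \<Longrightarrow> finite C"
  unfolding graph_def by (auto dest: components_subset intro: finite_subset)

lemma components_edge_closed:
  assumes "graph V E" "C \<in> components V E" "x \<in> C" "{x, y} \<in> E"
  shows "y \<in> C"
proof -
  have "(x, y) \<in> adj V E" using assms(4) graph_edge_in_vertices[OF assms(1,4)] unfolding adj_def by simp
  then show ?thesis using components_eq_class[OF assms(2,3)] by (simp add: r_into_rtrancl)
qed

lemma induced_path_subset_component:
  assumes g: "graph V E" and "X \<subseteq> V" "0 < k"
    and iso: "graph_iso X (induced E X) (path_V k) (path_E k)"
  obtains C where "C \<in> components V E" "X \<subseteq> C"
proof -
  obtain f where f: "bij_betw f {..<k} X"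
    and fE: "\<And>s t. s < k \<Longrightarrow> t < k \<Longrightarrow> {f s, f t} \<in> E \<longleftrightarrow> t = Suc s \<or> s = Suc t"
    using graph_iso_induced_pathE[OF iso] by blast
  have "f 0 \<in> V" using bij_betwE[OF f] assms(2,3) by blast
  then have C: "(adj V E)\<^sup>* `` {f 0} \<in> components V E" unfolding components_def by blast
  have "t < k \<longrightarrow> f t \<in> (adj V E)\<^sup>* `` {f 0}" for t
  proof (induction t)
    case (Suc t)
    then show ?case using components_edge_closed[OF g C, of "f t" "f (Suc t)"] fE[of t "Suc t"] by auto
  qed simp
  then have "X \<subseteq> (adj V E)\<^sup>* `` {f 0}" using bij_betw_imp_surj_on[OF f] by auto
  with C that show ?thesis by blast
qed

section \<open>Components of graphs of maximum degree 2\<close>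

abbreviation walk :: "'a set set \<Rightarrow> 'a list \<Rightarrow> bool" where
  "walk E ws \<equiv> successively (\<lambda>x y. {x, y} \<in> E) ws"

lemma interior_neighbour_of_walk:
  assumes g: "graph V E" and md: "max_degree V E \<le> 2"
    and ws: "walk E ws" "distinct ws"
    and i: "0 < i" "Suc i < length ws" and e: "{ws ! i, y} \<in> E"
  shows "y = ws ! (i - 1) \<or> y = ws ! Suc i"
proof (rule neighbours_of_max_degree_le_2[OF g md])
  show "{ws ! (i - 1), ws ! i} \<in> E" using successively_nth[OF ws(1), of "i - 1"] i by simp
  show "{ws ! Suc i, ws ! i} \<in> E" using successively_nth[OF ws(1), of i] i by (simp add: insert_commute)
  show "{y, ws ! i} \<in> E" using e by (simp add: insert_commute)
  show "ws ! (i - 1) \<noteq> ws ! Suc i" using ws(2) i by (simp add: nth_eq_iff_index_eq)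
qed

lemma walk_chord_joins_ends:
  assumes g: "graph V E" and md: "max_degree V E \<le> 2"
    and ws: "walk E ws" "distinct ws"
    and ij: "i < j" "j < length ws" "j \<noteq> Suc i" and e: "{ws ! i, ws ! j} \<in> E"
  shows "i = 0 \<and> j = length ws - 1"
proof
  show "i = 0"
  proof (rule ccontr)
    assume "i \<noteq> 0"
    then have "ws ! j = ws ! (i - 1) \<or> ws ! j = ws ! Suc i"
      using interior_neighbour_of_walk[OF g md ws _ _ e] ij by simp
    then show False using ws(2) ij by (auto simp: nth_eq_iff_index_eq)
  qed
  show "j = length ws - 1"
  proof (rule ccontr)
    assume "j \<noteq> length ws - 1"
    with ij have j: "Suc j < length ws" by simp
    then have "ws ! i = ws ! (j - 1) \<or> ws ! i = ws ! Suc j"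
      using interior_neighbour_of_walk[OF g md ws, of j "ws ! i"] ij e by (simp add: insert_commute)
    then show False using ws(2) ij j by (auto simp: nth_eq_iff_index_eq)
  qed
qed

lemma walk_edge_iff:
  assumes g: "graph V E" and md: "max_degree V E \<le> 2"
    and ws: "walk E ws" "distinct ws" and ij: "i < length ws" "j < length ws"
  shows "{ws ! i, ws ! j} \<in> E \<longleftrightarrow> j = Suc i \<or> i = Suc j \<or>
           ({i, j} = {0, length ws - 1} \<and> {ws ! 0, ws ! (length ws - 1)} \<in> E)"
proof
  assume e: "{ws ! i, ws ! j} \<in> E"
  then have "i \<noteq> j" using graph_edge_neq[OF g] by blast
  then consider "i < j" | "j < i" by linarith
  then show "j = Suc i \<or> i = Suc j \<or> ({i, j} = {0, length ws - 1} \<and> {ws ! 0, ws ! (length ws - 1)} \<in> E)"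
  proof cases
    case 1
    then show ?thesis using walk_chord_joins_ends[OF g md ws 1 ij(2) _ e] e by auto
  next
    case 2
    then show ?thesis
      using walk_chord_joins_ends[OF g md ws 2 ij(1)] e by (auto simp: insert_commute)
  qed
next
  assume "j = Suc i \<or> i = Suc j \<or> ({i, j} = {0, length ws - 1} \<and> {ws ! 0, ws ! (length ws - 1)} \<in> E)"
  then show "{ws ! i, ws ! j} \<in> E"
    using successively_nth[OF ws(1), of i] successively_nth[OF ws(1), of j] ij
    by (auto simp: doubleton_eq_iff insert_commute)
qed

text \<open>A longest walk inside the component is closed under adjacency: it cannot be extended at
  an end, and an interior vertex already has both of its neighbours on it.\<close>

lemma component_hamiltonian_walk:
  assumes g: "graph V E" and md: "max_degree V E \<le> 2" and C: "C \<in> components V E"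
  obtains ws where "walk E ws" "distinct ws" "set ws = C"
proof -
  define W where "W ws \<longleftrightarrow> walk E ws \<and> distinct ws \<and> set ws \<subseteq> C" for ws
  have "length ws < card C + 1" if "W ws" for ws
    using that card_mono[OF components_finite[OF g C]] unfolding W_def by (metis distinct_card less_Suc_eq_le Suc_eq_plus1)
  then obtain ws where ws: "W ws" and longest: "\<And>ys. W ys \<Longrightarrow> length ys \<le> length ws"
    using Lattices_Big.ex_has_greatest_nat[of W "[]" length "card C + 1"] unfolding W_def by auto
  have walk: "walk E ws" "distinct ws" and sub: "set ws \<subseteq> C" using ws unfolding W_def by auto
  obtain v where v: "v \<in> C" using C unfolding components_def by blast
  have "ws \<noteq> []" using longest[of "[v]"] v unfolding W_def by auto
  have closed: "adj V E `` set ws \<subseteq> set ws"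
  proof
    fix y assume "y \<in> adj V E `` set ws"
    then obtain i where i: "i < length ws" and e: "{ws ! i, y} \<in> E"
      unfolding adj_def by (auto simp: in_set_conv_nth)
    have yC: "y \<in> C" using components_edge_closed[OF g C _ e] sub i nth_mem by blast
    consider "Suc i = length ws" | "i = 0" | "0 < i" "Suc i < length ws" using i by linarith
    then show "y \<in> set ws"
    proof cases
      case 1
      then have "ws ! i = last ws" using \<open>ws \<noteq> []\<close> by (metis diff_Suc_1 last_conv_nth)
      moreover have "\<not> W (ws @ [y])" using longest[of "ws @ [y]"] by auto
      ultimately show ?thesis using walk sub yC e \<open>ws \<noteq> []\<close>
        unfolding W_def by (auto simp: successively_append_iff)
    next
      case 2
      have "\<not> W (y # ws)" using longest[of "y # ws"] by auto
      then show ?thesis using walk sub yC e 2 \<open>ws \<noteq> []\<close>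
        unfolding W_def by (auto simp: successively_Cons hd_conv_nth insert_commute)
    next
      case 3
      then show ?thesis using interior_neighbour_of_walk[OF g md walk 3 e] i by auto
    qed
  qed
  have "C \<subseteq> set ws"
  proof -
    obtain w where w: "w \<in> set ws" using \<open>ws \<noteq> []\<close> by (meson last_in_set)
    have "C = (adj V E)\<^sup>* `` {w}" using components_eq_class[OF C] w sub by blast
    also have "\<dots> \<subseteq> (adj V E)\<^sup>* `` set ws" using w by blast
    also have "\<dots> = set ws" using Image_closed_trancl[OF closed] .
    finally show ?thesis .
  qed
  then show ?thesis using that walk sub by blast
qed

definition cycle_enumeration :: "'a set set \<Rightarrow> 'a set \<Rightarrow> 'a list \<Rightarrow> bool" where
  "cycle_enumeration E C ws \<longleftrightarrow> distinct ws \<and> set ws = C \<and> 3 \<le> length ws \<and>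
     (\<forall>i<length ws. \<forall>j<length ws.
        {ws ! i, ws ! j} \<in> E \<longleftrightarrow> j = Suc i mod length ws \<or> i = Suc j mod length ws)"

lemma cycle_enumeration_edge_iff:
  "cycle_enumeration E C ws \<Longrightarrow> i < length ws \<Longrightarrow> j < length ws \<Longrightarrow>
    {ws ! i, ws ! j} \<in> E \<longleftrightarrow> j = Suc i mod length ws \<or> i = Suc j mod length ws"
  unfolding cycle_enumeration_def by blast

lemma is_cycle_component_if_enumeration:
  assumes "C \<in> components V E" "cycle_enumeration E C ws"
  shows "is_cycle_component V E C"
proof -
  have ws: "distinct ws" "set ws = C" "3 \<le> length ws"
    using assms(2) unfolding cycle_enumeration_def by auto
  have "graph_iso C (induced E C) {..<length ws} (cycle_E (length ws))"
    using bij_betw_nth[OF ws(1) refl ws(2)[symmetric]]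
    by (rule graph_iso_inducedI)
      (simp add: cycle_enumeration_edge_iff[OF assms(2)] mem_cycle_E_iff)
  then show ?thesis
    using assms(1) ws distinct_card[OF ws(1)]
    unfolding is_cycle_component_def cycle_V_def atLeast0LessThan by simp
qed

lemma cyclic_successor_iff:
  assumes "i < n" "j < n"
  shows "j = Suc i mod n \<or> i = Suc j mod n \<longleftrightarrow> j = Suc i \<or> i = Suc j \<or> {i, j} = {0, n - 1}"
  using assms by (cases "Suc i = n"; cases "Suc j = n") (auto simp: doubleton_eq_iff)

lemma component_path_or_cycle:
  assumes g: "graph V E" and md: "max_degree V E \<le> 2" and C: "C \<in> components V E"
  shows "is_path_component V E C \<or> (\<exists>ws. cycle_enumeration E C ws)"
proof -
  obtain ws where ws: "walk E ws" "distinct ws" "set ws = C"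
    using component_hamiltonian_walk[OF g md C] .
  define n where "n = length ws"
  have edge: "\<And>i j. i < n \<Longrightarrow> j < n \<Longrightarrow> {ws ! i, ws ! j} \<in> E \<longleftrightarrow> j = Suc i \<or> i = Suc j \<or>
      ({i, j} = {0, n - 1} \<and> {ws ! 0, ws ! (n - 1)} \<in> E)"
    unfolding n_def using walk_edge_iff[OF g md ws(1,2)] .
  show ?thesis
  proof (cases "3 \<le> n \<and> {ws ! 0, ws ! (n - 1)} \<in> E")
    case True
    then have "\<forall>i<n. \<forall>j<n. {ws ! i, ws ! j} \<in> E \<longleftrightarrow> j = Suc i mod n \<or> i = Suc j mod n"
      by (simp add: edge cyclic_successor_iff)
    then have "cycle_enumeration E C ws"
      unfolding cycle_enumeration_def using ws True by (simp add: n_def)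
    then show ?thesis by blast
  next
    case False
    have "{ws ! i, ws ! j} \<in> E \<longleftrightarrow> j = Suc i \<or> i = Suc j" if "i < n" "j < n" for i j
    proof -
      have ends: "j = Suc i \<or> i = Suc j" if "{i, j} = {0, n - 1}" "{ws ! 0, ws ! (n - 1)} \<in> E"
      proof -
        have "n \<noteq> 1" using that(2) graph_edge_neq[OF g] by force
        with False that(2) \<open>i < n\<close> have "n = 2" by auto
        then show ?thesis using that(1) by (auto simp: doubleton_eq_iff)
      qed
      show ?thesis using edge[OF that] ends by meson
    qed
    then have "graph_iso C (induced E C) {..<n} (path_E n)"
      using bij_betw_nth[OF ws(2) _ ws(3)[symmetric]]
      by (intro graph_iso_inducedI) (auto simp: n_def mem_path_E_iff)
    then have "is_path_component V E C"
      using C distinct_card[OF ws(2)] ws(3)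
      unfolding is_path_component_def path_V_def atLeast0LessThan n_def by simp
    then show ?thesis by blast
  qed
qed

section \<open>Induced paths in a cycle\<close>

lemma add_mod_cancel_left_nat:
  "(a::nat) < n \<Longrightarrow> b < n \<Longrightarrow> (j + a) mod n = (j + b) mod n \<longleftrightarrow> a = b"
  by (metis cong_def cong_add_lcancel_nat cong_less_modulus_unique_nat)

definition arc :: "'a list \<Rightarrow> nat \<Rightarrow> nat \<Rightarrow> 'a set" where
  "arc ws k j = (\<lambda>t. ws ! ((j + t) mod length ws)) ` {..<k}"

lemma arc_induced_path:
  assumes cyc: "cycle_enumeration E C ws" and k: "k < length ws"
  shows "arc ws k j \<subseteq> C" "graph_iso (arc ws k j) (induced E (arc ws k j)) (path_V k) (path_E k)"
proof -
  define n where "n = length ws"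
  define g where "g t = ws ! ((j + t) mod n)" for t
  have ws: "distinct ws" "set ws = C" "0 < n" using cyc unfolding cycle_enumeration_def n_def by auto
  have arc: "arc ws k j = g ` {..<k}" unfolding arc_def g_def n_def ..
  show "arc ws k j \<subseteq> C" unfolding arc g_def using ws by (auto simp: n_def)
  have "inj_on g {..<k}"
    using ws k nth_eq_iff_index_eq[OF ws(1)] add_mod_cancel_left_nat
    unfolding inj_on_def g_def n_def by simp
  then have "bij_betw g {..<k} (arc ws k j)" unfolding arc by (simp add: bij_betw_def)
  then have "graph_iso (arc ws k j) (induced E (arc ws k j)) {..<k} (path_E k)"
  proof (rule graph_iso_inducedI)
    fix s t assume "s \<in> {..<k}" "t \<in> {..<k}"
    then have st: "s < k" "t < k" "Suc s < n" "Suc t < n" using k n_def by auto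
    have "{g s, g t} \<in> E \<longleftrightarrow>
        (j + t) mod n = Suc ((j + s) mod n) mod n \<or> (j + s) mod n = Suc ((j + t) mod n) mod n"
      unfolding g_def n_def using cycle_enumeration_edge_iff[OF cyc] ws(3) n_def by simp
    also have "\<dots> \<longleftrightarrow> (j + t) mod n = (j + Suc s) mod n \<or> (j + s) mod n = (j + Suc t) mod n"
      by (simp add: mod_Suc_eq)
    also have "\<dots> \<longleftrightarrow> {s, t} \<in> path_E k"
      using add_mod_cancel_left_nat[of t n "Suc s" j] add_mod_cancel_left_nat[of s n "Suc t" j] st
      by (simp add: mem_path_E_iff)
    finally show "{g s, g t} \<in> E \<longleftrightarrow> {s, t} \<in> path_E k" .
  qed
  then show "graph_iso (arc ws k j) (induced E (arc ws k j)) (path_V k) (path_E k)"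
    unfolding path_V_def atLeast0LessThan .
qed

lemma mod_interval_eq_imp_eq:
  fixes j j' :: nat
  assumes j: "j < n" "j' < n" and k: "0 < k" "k < n"
    and eq: "(\<lambda>t. (j + t) mod n) ` {..<k} = (\<lambda>t. (j' + t) mod n) ` {..<k}"
  shows "j = j'"
proof -
  have "j \<in> (\<lambda>t. (j + t) mod n) ` {..<k}" using j k by force
  then obtain t where t: "t < k" "j = (j' + t) mod n" using eq by auto
  show ?thesis
  proof (cases t)
    case 0
    then show ?thesis using t j by simp
  next
    case (Suc t')
    then have "(j' + t') mod n \<in> (\<lambda>t. (j + t) mod n) ` {..<k}" using t eq by auto
    then obtain s where s: "s < k" "(j' + t') mod n = (j + s) mod n" by auto
    have "(j + Suc s) mod n = (j' + t) mod n" using s(2) Suc by (metis add_Suc_right mod_Suc_eq)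
    also have "\<dots> = (j + 0) mod n" using t j by simp
    finally have "Suc s = 0" using add_mod_cancel_left_nat[of "Suc s" n 0 j] s k by simp
    then show ?thesis by simp
  qed
qed

lemma inj_on_arc:
  assumes ws: "distinct ws" and k: "0 < k" "k < length ws"
  shows "inj_on (arc ws k) {..<length ws}"
proof (rule inj_onI)
  fix j j' assume j: "j \<in> {..<length ws}" "j' \<in> {..<length ws}" and eq: "arc ws k j = arc ws k j'"
  define I where "I j = (\<lambda>t. (j + t) mod length ws) ` {..<k}" for j
  have "arc ws k j = (!) ws ` I j" for j unfolding arc_def I_def by (simp add: image_image)
  moreover have "I j \<subseteq> {..<length ws}" for j unfolding I_def using k by (auto intro: mod_less_divisor)
  moreover have "inj_on ((!) ws) {..<length ws}" using inj_on_nth[OF ws] by simp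
  ultimately have "I j = I j'" using eq inj_on_image_eq_iff by metis
  then show "j = j'" using mod_interval_eq_imp_eq j k unfolding I_def by blast
qed

text \<open>Turning back at some step would give \<open>a t = a (t + 2)\<close>.\<close>

lemma steps_follow_first_step:
  assumes inj: "inj_on a {..<k}" and A: "a ` {..<k} \<subseteq> A"
    and left_unique: "\<And>x y z. x \<in> A \<Longrightarrow> y \<in> A \<Longrightarrow> R x z \<Longrightarrow> R y z \<Longrightarrow> x = y"
    and step: "\<And>t. Suc t < k \<Longrightarrow> R (a t) (a (Suc t)) \<or> R (a (Suc t)) (a t)"
    and first: "R (a 0) (a 1)"
  shows "Suc t < k \<Longrightarrow> R (a t) (a (Suc t))"
proof (induction t)
  case 0
  then show ?case using first by simp
next
  case (Suc t)
  show ?case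
  proof (rule ccontr)
    assume "\<not> R (a (Suc t)) (a (Suc (Suc t)))"
    then have "R (a (Suc (Suc t))) (a (Suc t))" using step Suc.prems by blast
    moreover have "R (a t) (a (Suc t))" using Suc by simp
    moreover have "a t \<in> A" "a (Suc (Suc t)) \<in> A" using A Suc.prems by auto
    ultimately have "a (Suc (Suc t)) = a t" using left_unique by blast
    then show False using inj_onD[OF inj] Suc.prems by fastforce
  qed
qed

lemma induced_path_in_cycle_index_lift:
  assumes cyc: "cycle_enumeration E C ws" and X: "X \<subseteq> C"
    and iso: "graph_iso X (induced E X) (path_V k) (path_E k)"
  obtains a where "inj_on a {..<k}" "\<And>t. t < k \<Longrightarrow> a t < length ws"
    "X = (\<lambda>t. ws ! a t) ` {..<k}"
    "\<And>s t. s < k \<Longrightarrow> t < k \<Longrightarrow>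
      t = Suc s \<or> s = Suc t \<longleftrightarrow> a t = Suc (a s) mod length ws \<or> a s = Suc (a t) mod length ws"
proof -
  have ws: "distinct ws" "set ws = C" using cyc unfolding cycle_enumeration_def by auto
  obtain g where g: "bij_betw g {..<k} X"
    and gE: "\<And>s t. s < k \<Longrightarrow> t < k \<Longrightarrow> {g s, g t} \<in> E \<longleftrightarrow> t = Suc s \<or> s = Suc t"
    using graph_iso_induced_pathE[OF iso] by blast
  define a where "a t = inv_into {..<length ws} ((!) ws) (g t)" for t
  have "bij_betw ((!) ws) {..<length ws} C" using bij_betw_nth[OF ws(1) _ ws(2)[symmetric]] by simp
  then have a: "a t < length ws" "ws ! a t = g t" if "t < k" for t
    using g X that unfolding a_def by (auto simp: bij_betw_def inv_into_into f_inv_into_f)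
  have "inj_on a {..<k}"
  proof (rule inj_onI)
    fix s t assume st: "s \<in> {..<k}" "t \<in> {..<k}" "a s = a t"
    then have "g s = g t" using a(2) by (metis lessThan_iff)
    then show "s = t" using inj_onD[OF bij_betw_imp_inj_on[OF g]] st by blast
  qed
  moreover have "X = (\<lambda>t. ws ! a t) ` {..<k}"
    using bij_betw_imp_surj_on[OF g] a by (auto simp: image_iff)
  moreover have "t = Suc s \<or> s = Suc t \<longleftrightarrow>
      a t = Suc (a s) mod length ws \<or> a s = Suc (a t) mod length ws" if "s < k" "t < k" for s t
    using gE[OF that] cycle_enumeration_edge_iff[OF cyc, of "a s" "a t"] a[OF that(1)] a[OF that(2)]
    by auto
  ultimately show ?thesis using that a by blast
qed

lemma reflect_lessThan_image: "(\<lambda>t. k - 1 - t) ` {..<k} = {..<k::nat}"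
proof (intro subset_antisym subsetI)
  fix t assume "t \<in> {..<k}"
  then show "t \<in> (\<lambda>t. k - 1 - t) ` {..<k}" by (intro image_eqI[of _ _ "k - 1 - t"]) auto
qed auto

text \<open>Up to reversing its enumeration, an induced path in a cycle runs forward around it.\<close>

lemma induced_path_in_cycle_forward_lift:
  assumes cyc: "cycle_enumeration E C ws" and X: "X \<subseteq> C"
    and iso: "graph_iso X (induced E X) (path_V k) (path_E k)"
  obtains c where "\<And>t. t < k \<Longrightarrow> c t < length ws" "X = (\<lambda>t. ws ! c t) ` {..<k}"
    "\<And>t. Suc t < k \<Longrightarrow> c (Suc t) = Suc (c t) mod length ws"
    "\<And>s t. s < k \<Longrightarrow> t < k \<Longrightarrow>
      t = Suc s \<or> s = Suc t \<longleftrightarrow> c t = Suc (c s) mod length ws \<or> c s = Suc (c t) mod length ws"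
  using cyc X iso
proof (rule induced_path_in_cycle_index_lift)
  define R where "R x y \<longleftrightarrow> y = Suc x mod length ws" for x y
  fix a assume inj: "inj_on a {..<k}" and a: "\<And>t. t < k \<Longrightarrow> a t < length ws"
    and lift: "X = (\<lambda>t. ws ! a t) ` {..<k}"
    and adj: "\<And>s t. s < k \<Longrightarrow> t < k \<Longrightarrow>
      t = Suc s \<or> s = Suc t \<longleftrightarrow> a t = Suc (a s) mod length ws \<or> a s = Suc (a t) mod length ws"
  have left_unique: "x = y" if "x < length ws" "y < length ws" "R x z" "R y z" for x y z
    using that by (auto simp: R_def mod_Suc split: if_splits)
  have A: "a ` {..<k} \<subseteq> {..<length ws}" using a by auto
  have step: "R (a t) (a (Suc t)) \<or> R (a (Suc t)) (a t)" if "Suc t < k" for t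
    using adj[of t "Suc t"] that unfolding R_def by simp
  consider "k \<le> 1 \<or> R (a 0) (a 1)" | "1 < k" "R (a 1) (a 0)"
    using adj[of 0 1] unfolding R_def by force
  then show ?thesis
  proof cases
    case 1
    then have "R (a t) (a (Suc t))" if "Suc t < k" for t
      using steps_follow_first_step[OF inj A left_unique step _ that] that by fastforce
    then show ?thesis using that[of a] a lift adj unfolding R_def by blast
  next
    case 2
    define c where "c t = a (k - 1 - t)" for t
    have backward: "R (a (Suc t)) (a t)" if "Suc t < k" for t
      using steps_follow_first_step[where R = "\<lambda>x y. R y x", OF inj A _ _ _ that] step 2
      unfolding R_def by blast
    have "R (c t) (c (Suc t))" if "Suc t < k" for t
      using backward[of "k - 2 - t"] that unfolding c_def by (simp add: Suc_diff_Suc numeral_2_eq_2)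
    moreover have "X = (\<lambda>t. ws ! c t) ` {..<k}"
      unfolding lift c_def using reflect_lessThan_image by (metis image_image)
    moreover have "t = Suc s \<or> s = Suc t \<longleftrightarrow> R (c s) (c t) \<or> R (c t) (c s)" if "s < k" "t < k" for s t
      using adj[of "k - 1 - s" "k - 1 - t"] that unfolding c_def R_def by auto
    ultimately show ?thesis using that[of c] a unfolding R_def c_def by auto
  qed
qed

lemma induced_path_in_cycle_is_arc:
  assumes cyc: "cycle_enumeration E C ws" and k: "0 < k" and X: "X \<subseteq> C"
    and iso: "graph_iso X (induced E X) (path_V k) (path_E k)"
  shows "k < length ws \<and> (\<exists>j<length ws. X = arc ws k j)"
  using cyc X iso
proof (rule induced_path_in_cycle_forward_lift)
  let ?n = "length ws"
  fix c assume c: "\<And>t. t < k \<Longrightarrow> c t < ?n" "X = (\<lambda>t. ws ! c t) ` {..<k}"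
    and forward: "\<And>t. Suc t < k \<Longrightarrow> c (Suc t) = Suc (c t) mod ?n"
    and adj: "\<And>s t. s < k \<Longrightarrow> t < k \<Longrightarrow>
      t = Suc s \<or> s = Suc t \<longleftrightarrow> c t = Suc (c s) mod ?n \<or> c s = Suc (c t) mod ?n"
  have ws: "distinct ws" "set ws = C" "3 \<le> ?n" using cyc unfolding cycle_enumeration_def by auto
  have c_eq: "t < k \<Longrightarrow> c t = (c 0 + t) mod ?n" for t
  proof (induction t)
    case 0
    then show ?case using c(1) by simp
  next
    case (Suc t)
    then show ?case using forward by (simp add: mod_Suc_eq)
  qed
  have "ws ! c t = ws ! ((c 0 + t) mod ?n)" if "t < k" for t
    using c_eq[OF that] by (rule arg_cong)
  then have "X = arc ws k (c 0)" unfolding c(2) arc_def by (intro image_cong) auto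
  moreover have "k < ?n"
  proof -
    have "k = card X" using card_induced_path[OF iso] ..
    also have "\<dots> \<le> card C" using X ws(2) by (metis card_mono List.finite_set)
    also have "\<dots> = ?n" using distinct_card[OF ws(1)] ws(2) by simp
    finally have "k \<le> ?n" .
    moreover have "k \<noteq> ?n"
    proof
      assume "k = ?n"
      then have "Suc (c (k - 1)) mod ?n = (c 0 + ?n) mod ?n"
        using c_eq[of "k - 1"] k by (simp add: mod_Suc_eq)
      also have "\<dots> = c 0" using c(1) k by simp
      finally have "k - 1 = Suc 0" using adj[of "k - 1" 0] k by auto
      then show False using \<open>k = ?n\<close> ws(3) by simp
    qed
    ultimately show ?thesis by simp
  qed
  ultimately show "k < ?n \<and> (\<exists>j<?n. X = arc ws k j)" using c(1) k by auto
qed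

section \<open>Counting induced paths\<close>

definition induced_path_sets :: "'a set set \<Rightarrow> nat \<Rightarrow> 'a set \<Rightarrow> 'a set set" where
  "induced_path_sets E k A = {X. X \<subseteq> A \<and> graph_iso X (induced E X) (path_V k) (path_E k)}"

lemma card_induced_path_sets_cycle:
  assumes cyc: "cycle_enumeration E C ws" and k: "0 < k" "k < card C"
  shows "card (induced_path_sets E k C) = card C"
proof -
  have ws: "distinct ws" "set ws = C" using cyc unfolding cycle_enumeration_def by auto
  then have n: "card C = length ws" using distinct_card by blast
  have "induced_path_sets E k C = arc ws k ` {..<length ws}"
    unfolding induced_path_sets_def
    using induced_path_in_cycle_is_arc[OF cyc k(1)] arc_induced_path[OF cyc] k(2) n by auto
  moreover have "card (arc ws k ` {..<length ws}) = length ws"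
    using card_image[OF inj_on_arc[OF ws(1) k(1)]] k(2) n by simp
  ultimately show ?thesis using n by simp
qed

lemma long_component_is_cycle:
  assumes g: "graph V E" and md: "max_degree V E \<le> 2" and C: "C \<in> components V E"
    and short_paths: "\<forall>C. is_path_component V E C \<longrightarrow> card C < k - 1" and "k \<le> card C"
  obtains ws where "cycle_enumeration E C ws"
  using component_path_or_cycle[OF g md C] short_paths \<open>k \<le> card C\<close> by force

lemma induced_path_in_long_cycle_component:
  assumes g: "graph V E" and md: "max_degree V E \<le> 2" and k: "0 < k"
    and short_paths: "\<forall>C. is_path_component V E C \<longrightarrow> card C < k - 1"
    and X: "X \<in> induced_path_sets E k V"
  obtains C ws where "C \<in> components V E" "X \<subseteq> C" "k < card C" "cycle_enumeration E C ws"
proof -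
  have iso: "graph_iso X (induced E X) (path_V k) (path_E k)" and "X \<subseteq> V"
    using X unfolding induced_path_sets_def by auto
  then obtain C where C: "C \<in> components V E" "X \<subseteq> C"
    using induced_path_subset_component[OF g _ k] by blast
  have "k = card X" using card_induced_path[OF iso] ..
  also have "\<dots> \<le> card C" using C components_finite[OF g] by (simp add: card_mono)
  finally obtain ws where cyc: "cycle_enumeration E C ws"
    using long_component_is_cycle[OF g md C(1) short_paths] by blast
  moreover have "card C = length ws" using cyc distinct_card unfolding cycle_enumeration_def by metis
  ultimately show ?thesis
    using that C induced_path_in_cycle_is_arc[OF cyc k C(2) iso] by auto
qed

lemma induced_path_sets_disjoint:
  assumes "C \<inter> C' = {}" "0 < k"
  shows "induced_path_sets E k C \<inter> induced_path_sets E k C' = {}"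
proof (rule ccontr)
  assume "induced_path_sets E k C \<inter> induced_path_sets E k C' \<noteq> {}"
  then obtain X where "X \<subseteq> C \<inter> C'" "graph_iso X (induced E X) (path_V k) (path_E k)"
    unfolding induced_path_sets_def by auto
  then show False using assms card_induced_path by fastforce
qed

lemma induced_path_sets_mono: "A \<subseteq> B \<Longrightarrow> induced_path_sets E k A \<subseteq> induced_path_sets E k B"
  unfolding induced_path_sets_def by auto

lemma finite_induced_path_sets: "finite A \<Longrightarrow> finite (induced_path_sets E k A)"
  unfolding induced_path_sets_def by (rule finite_subset[of _ "Pow A"]) auto

lemma long_component_unique:
  assumes g: "graph V E" and md: "max_degree V E \<le> 2" and k: "0 < k"
    and short_paths: "\<forall>C. is_path_component V E C \<longrightarrow> card C < k - 1"
    and few: "card (induced_path_sets E k V) \<le> 2 * k + 1"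
    and C: "C \<in> components V E" "k < card C" and C': "C' \<in> components V E" "k < card C'"
  shows "C = C'"
proof (rule ccontr)
  let ?P = "induced_path_sets E k"
  have count: "card (?P D) = card D" "?P D \<subseteq> ?P V" if D: "D \<in> components V E" "k < card D" for D
  proof -
    obtain ws where "cycle_enumeration E D ws"
      using long_component_is_cycle[OF g md D(1) short_paths] D(2) by force
    then show "card (?P D) = card D" using card_induced_path_sets_cycle k D(2) by blast
    show "?P D \<subseteq> ?P V" using induced_path_sets_mono components_subset[OF D(1)] .
  qed
  have fin: "finite (?P V)" using g finite_induced_path_sets unfolding graph_def by blast
  assume "C \<noteq> C'"
  then have "C \<inter> C' = {}" using components_disjoint[OF C(1) C'(1)] by blast
  then have "?P C \<inter> ?P C' = {}" by (rule induced_path_sets_disjoint[OF _ k])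
  then have "card C + card C' = card (?P C \<union> ?P C')"
    using count[OF C] count[OF C'] fin by (simp add: card_Un_disjoint finite_subset)
  also have "\<dots> \<le> card (?P V)" using count[OF C] count[OF C'] fin by (simp add: card_mono)
  finally show False using C(2) C'(2) few by simp
qed

theorem lemma4p4:
  fixes V :: "'a set" and E :: "'a set set" and k :: nat
  assumes "graph V E"
    and "max_degree V E = 2"
    and "0 < k"
    and "\<forall>C. is_path_component V E C \<longrightarrow> card C < k - 1"
    and "0 < s_count V E (path_V k) (path_E k)"
    and "s_count V E (path_V k) (path_E k) \<le> 2 * k + 1"
  shows "\<exists>C\<in>components V E. k < card C
           \<and> (\<forall>C'\<in>components V E. k < card C' \<longrightarrow> C' = C)
           \<and> is_cycle_component V E C
           \<and> card C = s_count V E (path_V k) (path_E k)"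
proof -
  note g = assms(1) and k = assms(3) and short_paths = assms(4)
  have md: "max_degree V E \<le> 2" using assms(2) by simp
  have s: "s_count V E (path_V k) (path_E k) = card (induced_path_sets E k V)"
    unfolding s_count_def induced_path_sets_def ..
  have lies_in_long_cycle: "\<exists>C ws. C \<in> components V E \<and> X \<subseteq> C \<and> k < card C \<and> cycle_enumeration E C ws"
    if "X \<in> induced_path_sets E k V" for X
    using induced_path_in_long_cycle_component[OF g md k short_paths that] by blast
  obtain X where "X \<in> induced_path_sets E k V" using assms(5) s by (metis card.empty ex_in_conv less_irrefl)
  then obtain C ws where C: "C \<in> components V E" "k < card C" and cyc: "cycle_enumeration E C ws"
    using lies_in_long_cycle by blast
  have unique: "C' = C" if "C' \<in> components V E" "k < card C'" for C'
    using long_component_unique[OF g md k short_paths _ that C] assms(6) s by simp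
  have "induced_path_sets E k V = induced_path_sets E k C"
  proof
    show "induced_path_sets E k V \<subseteq> induced_path_sets E k C"
    proof
      fix Y assume Y: "Y \<in> induced_path_sets E k V"
      then obtain D where "D \<in> components V E" "Y \<subseteq> D" "k < card D" using lies_in_long_cycle by blast
      then show "Y \<in> induced_path_sets E k C" using Y unique unfolding induced_path_sets_def by auto
    qed
  qed (rule induced_path_sets_mono[OF components_subset[OF C(1)]])
  then have "card C = s_count V E (path_V k) (path_E k)"
    using card_induced_path_sets_cycle[OF cyc k] C(2) s by simp
  then show ?thesis using C unique is_cycle_component_if_enumeration[OF C(1) cyc] by blast
qed

end
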